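(* Let $M$ be a matroid on $E$, $\mathfrak{S}\subseteq\mathcal{P}(E)$ and $Z\in\mathfrak{S}$. Then: (1) $\mathrm{ec}_{\mathfrak{S}}(M)-\mathrm{ec}_{\mathfrak{S}-\{Z\}}(M)=a_{\mathfrak{S}}(Z)\,b_{\mathfrak{S}}(Z)$; (2) for every $S\in\mathfrak{S}-\{Z\}$, $a_{\mathfrak{S}}(S)-a_{\mathfrak{S}-\{Z\}}(S)=a_{\mathfrak{S}}(Z)\,\mu_{\mathfrak{S}}(Z,S)$; (3) for every $S\in\mathfrak{S}-\{Z\}$, $b_{\mathfrak{S}}(S)-b_{\mathfrak{S}-\{Z\}}(S)=\mu_{\mathfrak{S}}(S,Z)\,b_{\mathfrak{S}}(Z)$.
   Context: $M$ has rank $k$. For $\mathfrak{T}\subseteq\mathcal{P}(E)$, viewed as a poset under inclusion with Möbius function $\mu_{\mathfrak{T}}$: $c(T)=\#T-\mathrm{rk}\,T$; $a_{\mathfrak{T}}(S)=\sum_{T\in\mathfrak{T}}c(T)\mu_{\mathfrak{T}}(T,S)$ (equivalently $a_{\mathfrak{T}}(S)=c(S)-\sum_{T\in\mathfrak{T},T\subsetneq S}a_{\mathfrak{T}}(T)$); $b_{\mathfrak{T}}(T)=\sum_{S\in\mathfrak{T}}(k-\mathrm{rk}\,S)\mu_{\mathfrak{T}}(T,S)$; $\mathrm{ec}_{\mathfrak{T}}(M)=\sum_{S\in\mathfrak{T}}(k-\mathrm{rk}\,S)a_{\mathfrak{T}}(S)$. *)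

theory Defs
  imports Main
begin

definition matroid :: "'a set \<Rightarrow> ('a set \<Rightarrow> bool) \<Rightarrow> bool" where
  "matroid E indep \<longleftrightarrow>
     finite E \<and>
     (\<forall>I. indep I \<longrightarrow> I \<subseteq> E) \<and>
     indep {} \<and>
     (\<forall>I J. indep J \<and> I \<subseteq> J \<longrightarrow> indep I) \<and>
     (\<forall>I J. indep I \<and> indep J \<and> card I < card J \<longrightarrow>
        (\<exists>x \<in> J - I. indep (insert x I)))"

definition mrank :: "('a set \<Rightarrow> bool) \<Rightarrow> 'a set \<Rightarrow> nat" where
  "mrank indep X = Max {card I | I. I \<subseteq> X \<and> indep I}"

function mobius :: "'a set set \<Rightarrow> 'a set \<Rightarrow> 'a set \<Rightarrow> int" where
  "mobius F x y =
     (if finite F \<and> x \<in> F \<and> y \<in> F \<and> x \<subseteq> y then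
        (if x = y then 1 else - (\<Sum>z\<in>{z\<in>F. x \<subseteq> z \<and> z \<subset> y}. mobius F x z))
      else 0)"
  by auto
termination
proof (relation "measure (\<lambda>(F,x,y). card {w\<in>F. w \<subset> y})")
  show "wf (measure (\<lambda>(F,x,y). card {w\<in>F. w \<subset> y}))" by simp
next
  fix F :: "'a set set" and x y z
  assume a: "finite F \<and> x \<in> F \<and> y \<in> F \<and> x \<subseteq> y" "x \<noteq> y"
     and z: "z \<in> {z\<in>F. x \<subseteq> z \<and> z \<subset> y}"
  have "{w\<in>F. w \<subset> z} \<subset> {w\<in>F. w \<subset> y}"
    using z by auto
  moreover have "finite {w\<in>F. w \<subset> y}" using a by auto
  ultimately have "card {w\<in>F. w \<subset> z} < card {w\<in>F. w \<subset> y}"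
    by (rule psubset_card_mono[rotated])
  then show "((F, x, z), F, x, y) \<in> measure (\<lambda>(F,x,y). card {w\<in>F. w \<subset> y})"
    by simp
qed

declare mobius.simps[simp del]

definition cval :: "('a set \<Rightarrow> bool) \<Rightarrow> 'a set \<Rightarrow> int" where
  "cval indep T = int (card T) - int (mrank indep T)"

definition aval :: "('a set \<Rightarrow> bool) \<Rightarrow> 'a set set \<Rightarrow> 'a set \<Rightarrow> int" where
  "aval indep \<T> S = (\<Sum>T\<in>\<T>. cval indep T * mobius \<T> T S)"

definition bval :: "'a set \<Rightarrow> ('a set \<Rightarrow> bool) \<Rightarrow> 'a set set \<Rightarrow> 'a set \<Rightarrow> int" where
  "bval E indep \<T> T = (\<Sum>S\<in>\<T>. (int (mrank indep E) - int (mrank indep S)) * mobius \<T> T S)"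

definition ec :: "'a set \<Rightarrow> ('a set \<Rightarrow> bool) \<Rightarrow> 'a set set \<Rightarrow> int" where
  "ec E indep \<T> = (\<Sum>S\<in>\<T>. (int (mrank indep E) - int (mrank indep S)) * aval indep \<T> S)"

end

theory Submission
  imports Defs
begin

text \<open>The proof rests on a deletion formula for the Moebius function: for x, y \<noteq> Z the
  Moebius function of S - {Z} at (x, y) is mu(x,y) - mu(x,Z) mu(Z,y), where mu is that of S; it
  follows by induction along the defining recursion of mu. Substituting it into the sums defining
  a, b and ec and splitting off the summands indexed by Z (where mu(Z,Z) = 1), the correction terms
  collect into a(Z) and b(Z). The matroid enters only through the finiteness of E.\<close>

lemma mobius_refl: "finite F \<Longrightarrow> x \<in> F \<Longrightarrow> mobius F x x = 1"
  by (subst mobius.simps) auto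

lemma mobius_psubset:
  "finite F \<Longrightarrow> x \<in> F \<Longrightarrow> y \<in> F \<Longrightarrow> x \<subset> y \<Longrightarrow>
   mobius F x y = - (\<Sum>z\<in>{z\<in>F. x \<subseteq> z \<and> z \<subset> y}. mobius F x z)"
  by (subst mobius.simps) auto

lemma mobius_nonzeroD: "mobius F x y \<noteq> 0 \<Longrightarrow> finite F \<and> x \<in> F \<and> y \<in> F \<and> x \<subseteq> y"
  by (subst (asm) mobius.simps) (auto split: if_splits)

lemma mobius_mult_nonzeroD:
  assumes "mobius F x Z * mobius F Z y \<noteq> 0"
  shows "x \<in> F \<and> y \<in> F \<and> x \<subseteq> Z \<and> Z \<subseteq> y"
proof -
  have "mobius F x Z \<noteq> 0" "mobius F Z y \<noteq> 0"
    using assms by auto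
  then show ?thesis
    using mobius_nonzeroD by blast
qed

lemma sum_mobius_below:
  assumes "finite F" "y \<in> F" "x \<subseteq> Z" "Z \<noteq> y"
  shows "(\<Sum>z\<in>{z\<in>F. x \<subseteq> z \<and> z \<subset> y}. mobius F Z z) = - mobius F Z y"
proof (cases "Z \<in> F \<and> Z \<subseteq> y")
  case True
  have "(\<Sum>z\<in>{z\<in>F. x \<subseteq> z \<and> z \<subset> y}. mobius F Z z) = (\<Sum>z\<in>{z\<in>F. Z \<subseteq> z \<and> z \<subset> y}. mobius F Z z)"
    by (rule sum.mono_neutral_right) (use assms mobius_nonzeroD in fastforce)+
  also have "\<dots> = - mobius F Z y"
    using mobius_psubset[of F Z y] True assms by (simp add: psubset_eq)
  finally show ?thesis .
next
  case False
  have zero: "mobius F Z z = 0" if "z \<subseteq> y" for z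
  proof (rule ccontr)
    assume "mobius F Z z \<noteq> 0"
    with mobius_nonzeroD have "Z \<in> F" "Z \<subseteq> z" by auto
    with False that show False by auto
  qed
  then have "(\<Sum>z\<in>{z\<in>F. x \<subseteq> z \<and> z \<subset> y}. mobius F Z z) = 0"
    by (intro sum.neutral) (simp add: psubset_eq)
  with zero[of y] show ?thesis by simp
qed

lemma mobius_delete:
  "finite F \<Longrightarrow> x \<noteq> Z \<Longrightarrow> y \<noteq> Z \<Longrightarrow>
   mobius (F - {Z}) x y = mobius F x y - mobius F x Z * mobius F Z y"
proof (induction "F - {Z}" x y rule: mobius.induct)
  case (1 x y)
  have fin: "finite (F - {Z})" using "1.prems"(1) by simp
  consider "\<not> (x \<in> F - {Z} \<and> y \<in> F - {Z} \<and> x \<subseteq> y)" | "x \<in> F - {Z}" "x = y"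
    | "x \<in> F - {Z}" "y \<in> F - {Z}" "x \<subset> y"
    by blast
  then show ?case
  proof cases
    case 1
    have "mobius (F - {Z}) x y = 0" "mobius F x y = 0"
      using 1 "1.prems" mobius_nonzeroD by blast+
    moreover have "mobius F x Z * mobius F Z y = 0"
      using 1 "1.prems" mobius_mult_nonzeroD by blast
    ultimately show ?thesis by simp
  next
    case 2
    have "mobius F x Z * mobius F Z y = 0"
      using 2 "1.prems" mobius_mult_nonzeroD by blast
    then show ?thesis
      using 2 "1.prems"(1) by (simp add: mobius_refl)
  next
    case 3
    define I where "I = {z\<in>F. x \<subseteq> z \<and> z \<subset> y}"
    have fin_I: "finite I" using "1.prems"(1) by (simp add: I_def)
    have "mobius (F - {Z}) x y = - (\<Sum>z\<in>I - {Z}. mobius (F - {Z}) x z)"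
      using mobius_psubset[OF fin 3] by (simp add: I_def set_diff_eq conj_ac)
    also have "(\<Sum>z\<in>I - {Z}. mobius (F - {Z}) x z)
               = (\<Sum>z\<in>I - {Z}. mobius F x z - mobius F x Z * mobius F Z z)"
    proof (rule sum.cong)
      fix z assume "z \<in> I - {Z}"
      then have z: "z \<in> {z\<in>F - {Z}. x \<subseteq> z \<and> z \<subset> y}" "z \<noteq> Z"
        by (auto simp: I_def)
      show "mobius (F - {Z}) x z = mobius F x z - mobius F x Z * mobius F Z z"
        by (rule "1.hyps"[OF _ _ z(1) "1.prems"(1,2) z(2)]) (use fin 3 in auto)
    qed simp
    also have "\<dots> = (\<Sum>z\<in>I. mobius F x z - mobius F x Z * mobius F Z z)"
      \<comment> \<open>the summand at Z vanishes because \<mu>(Z,Z) = 1\<close>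
      by (auto simp: sum_diff1 fin_I mobius_refl I_def "1.prems"(1))
    also have "\<dots> = (\<Sum>z\<in>I. mobius F x z) - mobius F x Z * (\<Sum>z\<in>I. mobius F Z z)"
      by (simp add: sum_subtractf sum_distrib_left)
    also have "(\<Sum>z\<in>I. mobius F x z) = - mobius F x y"
      using mobius_psubset[of F x y] 3 "1.prems"(1) by (simp add: I_def)
    also have "mobius F x Z * (\<Sum>z\<in>I. mobius F Z z) = - mobius F x Z * mobius F Z y"
    proof (cases "mobius F x Z = 0")
      case False
      then have "x \<subseteq> Z"
        using mobius_nonzeroD by blast
      then show ?thesis
        using sum_mobius_below[of F y x Z] 3 "1.prems"(1,3) by (simp add: I_def)
    qed simp
    finally show ?thesis by simp
  qed
qed

lemma sum_mobius_left_delete: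
  assumes "finite F" "Z \<in> F" "S \<noteq> Z"
  shows "(\<Sum>T\<in>F. f T * mobius F T S) - (\<Sum>T\<in>F - {Z}. f T * mobius (F - {Z}) T S)
         = (\<Sum>T\<in>F. f T * mobius F T Z) * mobius F Z S"
proof -
  have "(\<Sum>T\<in>F - {Z}. f T * mobius (F - {Z}) T S)
        = (\<Sum>T\<in>F - {Z}. f T * mobius F T S) - (\<Sum>T\<in>F - {Z}. f T * mobius F T Z) * mobius F Z S"
    using assms by (simp add: mobius_delete right_diff_distrib sum_subtractf sum_distrib_right mult.assoc)
  then show ?thesis
    using assms by (simp add: sum.remove mobius_refl algebra_simps)
qed

lemma sum_mobius_right_delete:
  assumes "finite F" "Z \<in> F" "S \<noteq> Z"
  shows "(\<Sum>T\<in>F. g T * mobius F S T) - (\<Sum>T\<in>F - {Z}. g T * mobius (F - {Z}) S T)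
         = mobius F S Z * (\<Sum>T\<in>F. g T * mobius F Z T)"
proof -
  have "(\<Sum>T\<in>F - {Z}. g T * mobius (F - {Z}) S T)
        = (\<Sum>T\<in>F - {Z}. g T * mobius F S T) - mobius F S Z * (\<Sum>T\<in>F - {Z}. g T * mobius F Z T)"
    using assms by (simp add: mobius_delete right_diff_distrib sum_subtractf sum_distrib_left algebra_simps)
  then show ?thesis
    using assms by (simp add: sum.remove mobius_refl algebra_simps)
qed

lemma sum_mobius_transform_delete:
  assumes "finite F" "Z \<in> F"
  shows "(\<Sum>S\<in>F. g S * (\<Sum>T\<in>F. f T * mobius F T S))
         - (\<Sum>S\<in>F - {Z}. g S * (\<Sum>T\<in>F - {Z}. f T * mobius (F - {Z}) T S))
         = (\<Sum>T\<in>F. f T * mobius F T Z) * (\<Sum>S\<in>F. g S * mobius F Z S)"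
proof -
  let ?a = "\<lambda>S. \<Sum>T\<in>F. f T * mobius F T S"
  have "(\<Sum>S\<in>F - {Z}. g S * (\<Sum>T\<in>F - {Z}. f T * mobius (F - {Z}) T S))
        = (\<Sum>S\<in>F - {Z}. g S * ?a S - ?a Z * (g S * mobius F Z S))"
    using sum_mobius_left_delete[OF assms] by (intro sum.cong) (auto simp: algebra_simps eq_diff_eq)
  also have "\<dots> = (\<Sum>S\<in>F - {Z}. g S * ?a S) - ?a Z * (\<Sum>S\<in>F - {Z}. g S * mobius F Z S)"
    by (simp add: sum_subtractf sum_distrib_left)
  moreover have "(\<Sum>S\<in>F. g S * ?a S) = g Z * ?a Z + (\<Sum>S\<in>F - {Z}. g S * ?a S)"
    using assms by (rule sum.remove)
  moreover have "(\<Sum>S\<in>F. g S * mobius F Z S) = g Z + (\<Sum>S\<in>F - {Z}. g S * mobius F Z S)"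
    using assms by (simp add: sum.remove mobius_refl)
  ultimately show ?thesis
    by (simp add: algebra_simps)
qed

theorem proposition6p3:
  fixes E :: "'a set" and indep :: "'a set \<Rightarrow> bool" and \<S> :: "'a set set" and Z :: "'a set"
  assumes "matroid E indep"
    and "\<S> \<subseteq> Pow E"
    and "Z \<in> \<S>"
  shows "ec E indep \<S> - ec E indep (\<S> - {Z}) = aval indep \<S> Z * bval E indep \<S> Z
         \<and> (\<forall>S \<in> \<S> - {Z}. aval indep \<S> S - aval indep (\<S> - {Z}) S = aval indep \<S> Z * mobius \<S> Z S)
         \<and> (\<forall>S \<in> \<S> - {Z}. bval E indep \<S> S - bval E indep (\<S> - {Z}) S = mobius \<S> S Z * bval E indep \<S> Z)"
proof -
  have "finite E"
    using assms(1) by (simp add: matroid_def)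
  then have fin: "finite \<S>"
    using assms(2) finite_subset by blast
  have "ec E indep \<S> - ec E indep (\<S> - {Z}) = aval indep \<S> Z * bval E indep \<S> Z"
    unfolding ec_def aval_def bval_def by (rule sum_mobius_transform_delete[OF fin assms(3)])
  moreover have "aval indep \<S> S - aval indep (\<S> - {Z}) S = aval indep \<S> Z * mobius \<S> Z S"
    if "S \<in> \<S> - {Z}" for S
    unfolding aval_def using that by (intro sum_mobius_left_delete[OF fin assms(3)]) simp
  moreover have "bval E indep \<S> S - bval E indep (\<S> - {Z}) S = mobius \<S> S Z * bval E indep \<S> Z"
    if "S \<in> \<S> - {Z}" for S
    unfolding bval_def using that by (intro sum_mobius_right_delete[OF fin assms(3)]) simp
  ultimately show ?thesis
    by blast
qed

end
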